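(* Let $\mathcal{P}$ be a set of probability distributions on $\mathbb{N}$ with associated i.i.d. model class $\mathcal{P}^\infty$, let $\eta>0$ and $\Pi_0\in\mathbb{R}^+$. An insurer with initial capital $\Pi_0$ can find an insurance scheme $(\tau,\Pi)$ such that, for every $p\in\mathcal{P}^\infty$, the probability under $p$ that $(\tau,\Pi)$ never goes bankrupt is bigger than $1-\eta$, if and only if there is a loss domination scheme $\Phi$ such that for every $p\in\mathcal{P}^\infty$ the probability under $p$ that $\Phi$ goes bankrupt is less than $\eta$.
   Context: Losses $X_1,X_2,\ldots\in\mathbb{N}=\{0,1,2,\ldots\}$; $\mathcal{P}^\infty$ is the set of i.i.d. measures on $\mathbb{N}^\infty$ whose one-dimensional marginals form $\mathcal{P}$. $\mathbb{N}^*$ is the set of finite sequences over $\mathbb{N}$ (including the empty sequence), $x^n=x_1,\ldots,x_n$, $\mathbb{R}^+$ the nonnegative reals. An insurance scheme is a pair $(\tau,\Pi)$ with $\tau:\mathbb{N}^*\to\{0,1\}$ such that $\tau(x_1,\ldots,x_n)=1\Rightarrow\tau(x_1,\ldots,x_{n+1})=1$ and $p(\sup_n\tau(X^n)=1)=1$ for all $p\in\mathcal{P}^\infty$, and $\Pi:\mathbb{N}^*\to\mathbb{R}^+$ with $\Pi(x^n)=0$ when $\tau(x^n)=0$; it goes bankrupt if $\Pi_0+\sum_{i=1}^n(\Pi(X^{i-1})-X_i)\mathbf{1}(\tau(X^{i-1})=1)<0$ for some $n\ge1$. A loss domination scheme is a map $\Phi:\mathbb{N}^*\to\mathbb{R}^+\cup\{\infty\}$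 such that $\Phi(x_1,\ldots,x_n)<\infty\Rightarrow\Phi(x_1,\ldots,x_{n+1})<\infty$ for all $x^n$, and $p(\inf_{n\ge1}\Phi(X^n)<\infty)=1$ for all $p\in\mathcal{P}^\infty$. $\Phi$ goes bankrupt if $\Phi(X^{n-1})<X_n$ for some $n\ge1$. *)

theory Defs
  imports "HOL-Probability.Probability"
begin

text \<open>Sequences of losses are streams of naturals; the finite prefix x^n is stake n \<omega>,
  and X_{n+1} is \<omega> !! n. The i.i.d. measure with marginal p is stream_space (measure_pmf p).\<close>

definition iid :: "nat pmf \<Rightarrow> nat stream measure" where
  "iid p = stream_space (measure_pmf p)"

definition insurance_scheme ::
  "nat pmf set \<Rightarrow> (nat list \<Rightarrow> bool) \<Rightarrow> (nat list \<Rightarrow> real) \<Rightarrow> bool" where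
  "insurance_scheme P \<tau> Pr \<longleftrightarrow>
     (\<forall>xs x. \<tau> xs \<longrightarrow> \<tau> (xs @ [x])) \<and>
     (\<forall>p\<in>P. measure (iid p) {\<omega> \<in> space (iid p). \<exists>n. \<tau> (stake n \<omega>)} = 1) \<and>
     (\<forall>xs. Pr xs \<ge> 0) \<and>
     (\<forall>xs. \<not> \<tau> xs \<longrightarrow> Pr xs = 0)"

definition ins_bankrupt ::
  "real \<Rightarrow> (nat list \<Rightarrow> bool) \<Rightarrow> (nat list \<Rightarrow> real) \<Rightarrow> nat stream \<Rightarrow> bool" where
  "ins_bankrupt Pi0 \<tau> Pr \<omega> \<longleftrightarrow>
     (\<exists>n\<ge>1. Pi0 + (\<Sum>i<n. (Pr (stake i \<omega>) - real (\<omega> !! i)) *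
                         (if \<tau> (stake i \<omega>) then 1 else 0)) < 0)"

definition loss_domination_scheme ::
  "nat pmf set \<Rightarrow> (nat list \<Rightarrow> ennreal) \<Rightarrow> bool" where
  "loss_domination_scheme P \<Phi> \<longleftrightarrow>
     (\<forall>xs x. \<Phi> xs < \<infinity> \<longrightarrow> \<Phi> (xs @ [x]) < \<infinity>) \<and>
     (\<forall>p\<in>P. measure (iid p) {\<omega> \<in> space (iid p). \<exists>n\<ge>1. \<Phi> (stake n \<omega>) < \<infinity>} = 1)"

definition ld_bankrupt :: "(nat list \<Rightarrow> ennreal) \<Rightarrow> nat stream \<Rightarrow> bool" where
  "ld_bankrupt \<Phi> \<omega> \<longleftrightarrow> (\<exists>n. \<Phi> (stake n \<omega>) < of_nat (\<omega> !! n))"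

end

theory Submission imports Defs begin

text \<open>An insurance scheme yields the loss domination
  scheme that assigns to a prefix the current capital plus the next premium (and \<infinity> before
  insuring starts); it fails to dominate the next loss exactly when the capital becomes negative.
  Conversely, a loss domination scheme \<Phi> yields the insurance scheme that insures once \<Phi> is
  finite and charges \<Phi> as premium; each premium covers the next loss unless \<Phi> goes bankrupt,
  so the capital never drops below its nonnegative initial value. In both directions bankruptcy of
  the derived scheme implies bankruptcy of the given one, which transfers the probability bounds.\<close>

lemma space_iid: "space (iid p) = UNIV"
  unfolding iid_def by (simp add: space_stream_space)

lemma sets_iid: "sets (iid p) = sets (stream_space (count_space UNIV))"
  unfolding iid_def by (rule sets_stream_space_cong) simp

lemma prob_space_iid: "prob_space (iid p)"
  unfolding iid_def by (rule prob_space.prob_space_stream_space) (rule prob_space_measure_pmf)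

lemma sets_iid_Collect:
  assumes "Measurable.pred (stream_space (count_space UNIV)) Q"
  shows "{\<omega> \<in> space (iid p). Q \<omega>} \<in> sets (iid p)"
  using assms unfolding sets_iid by (simp add: pred_def space_iid space_stream_space)

lemma measure_iid_Collect_not:
  assumes "Measurable.pred (stream_space (count_space UNIV)) Q"
  shows "measure (iid p) {\<omega> \<in> space (iid p). \<not> Q \<omega>} = 1 - measure (iid p) {\<omega> \<in> space (iid p). Q \<omega>}"
proof -
  interpret prob_space "iid p" by (rule prob_space_iid)
  have "{\<omega> \<in> space (iid p). \<not> Q \<omega>} = space (iid p) - {\<omega> \<in> space (iid p). Q \<omega>}" by auto
  then show ?thesis using prob_compl[OF sets_iid_Collect[OF assms]] by simp
qed

lemma measure_iid_Collect_mono: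
  assumes "Measurable.pred (stream_space (count_space UNIV)) Q" and "\<And>\<omega>. R \<omega> \<Longrightarrow> Q \<omega>"
  shows "measure (iid p) {\<omega> \<in> space (iid p). R \<omega>} \<le> measure (iid p) {\<omega> \<in> space (iid p). Q \<omega>}"
proof -
  interpret prob_space "iid p" by (rule prob_space_iid)
  show ?thesis using assms(2) by (intro finite_measure_mono sets_iid_Collect[OF assms(1)]) auto
qed

lemma pred_ins_bankrupt: "Measurable.pred (stream_space (count_space UNIV)) (ins_bankrupt Pi0 \<tau> Pr)"
  unfolding ins_bankrupt_def by measurable

lemma pred_ld_bankrupt: "Measurable.pred (stream_space (count_space UNIV)) (ld_bankrupt \<Phi>)"
  unfolding ld_bankrupt_def by measurable

lemma ex_stake_ge_1_iff:
  assumes "\<And>xs x. Q xs \<Longrightarrow> Q (xs @ [x])"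
  shows "(\<exists>n\<ge>1. Q (stake n \<omega>)) \<longleftrightarrow> (\<exists>n. Q (stake n \<omega>))"
proof
  assume "\<exists>n. Q (stake n \<omega>)"
  then obtain n where "Q (stake n \<omega>)" by blast
  then have "Q (stake (Suc n) \<omega>)" by (simp add: stake_Suc assms del: stake.simps)
  then show "\<exists>n\<ge>1. Q (stake n \<omega>)" by (intro exI[of _ "Suc n"]) simp
qed blast

definition capital :: "real \<Rightarrow> (nat list \<Rightarrow> bool) \<Rightarrow> (nat list \<Rightarrow> real) \<Rightarrow> nat list \<Rightarrow> real" where
  "capital Pi0 \<tau> Pr xs = Pi0 + (\<Sum>i<length xs. (Pr (take i xs) - real (xs ! i)) *
                              (if \<tau> (take i xs) then 1 else 0))"

lemma capital_Nil [simp]: "capital Pi0 \<tau> Pr [] = Pi0"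
  by (simp add: capital_def)

lemma capital_snoc:
  "capital Pi0 \<tau> Pr (xs @ [x]) =
     capital Pi0 \<tau> Pr xs + (Pr xs - real x) * (if \<tau> xs then 1 else 0)"
  unfolding capital_def by (simp add: nth_append)

lemma capital_stake_Suc:
  "capital Pi0 \<tau> Pr (stake (Suc n) \<omega>) =
     capital Pi0 \<tau> Pr (stake n \<omega>) + (Pr (stake n \<omega>) - real (\<omega> !! n)) * (if \<tau> (stake n \<omega>) then 1 else 0)"
  by (simp add: stake_Suc capital_snoc del: stake.simps)

lemma ins_bankrupt_iff_capital:
  "ins_bankrupt Pi0 \<tau> Pr \<omega> \<longleftrightarrow> (\<exists>n\<ge>1. capital Pi0 \<tau> Pr (stake n \<omega>) < 0)"
proof -
  have "capital Pi0 \<tau> Pr (stake n \<omega>) =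
          Pi0 + (\<Sum>i<n. (Pr (stake i \<omega>) - real (\<omega> !! i)) * (if \<tau> (stake i \<omega>) then 1 else 0))" for n
    by (induction n) (simp_all add: capital_stake_Suc del: stake.simps(2))
  then show ?thesis unfolding ins_bankrupt_def by simp
qed

definition ld_of_insurance :: "real \<Rightarrow> (nat list \<Rightarrow> bool) \<Rightarrow> (nat list \<Rightarrow> real) \<Rightarrow> nat list \<Rightarrow> ennreal" where
  "ld_of_insurance Pi0 \<tau> Pr xs = (if \<tau> xs then ennreal (capital Pi0 \<tau> Pr xs + Pr xs) else \<infinity>)"

lemma ld_of_insurance_finite_iff: "ld_of_insurance Pi0 \<tau> Pr xs < \<infinity> \<longleftrightarrow> \<tau> xs"
  by (simp add: ld_of_insurance_def)

lemma loss_domination_scheme_ld_of_insurance: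
  assumes "insurance_scheme P \<tau> Pr"
  shows "loss_domination_scheme P (ld_of_insurance Pi0 \<tau> Pr)"
proof -
  have \<tau>_snoc: "\<And>xs x. \<tau> xs \<Longrightarrow> \<tau> (xs @ [x])"
    using assms unfolding insurance_scheme_def by blast
  have "(\<exists>n\<ge>1. \<tau> (stake n \<omega>)) \<longleftrightarrow> (\<exists>n. \<tau> (stake n \<omega>))" for \<omega>
    using ex_stake_ge_1_iff[of \<tau>, OF \<tau>_snoc] .
  then show ?thesis
    using assms \<tau>_snoc
    unfolding loss_domination_scheme_def insurance_scheme_def ld_of_insurance_finite_iff by simp
qed

lemma ld_bankrupt_ld_of_insurance_imp_ins_bankrupt:
  assumes "ld_bankrupt (ld_of_insurance Pi0 \<tau> Pr) \<omega>"
  shows "ins_bankrupt Pi0 \<tau> Pr \<omega>"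
proof -
  obtain n where n: "ld_of_insurance Pi0 \<tau> Pr (stake n \<omega>) < of_nat (\<omega> !! n)"
    using assms unfolding ld_bankrupt_def by blast
  then have insured: "\<tau> (stake n \<omega>)"
    by (auto simp: ld_of_insurance_def split: if_splits)
  with n have "ennreal (capital Pi0 \<tau> Pr (stake n \<omega>) + Pr (stake n \<omega>)) < ennreal (real (\<omega> !! n))"
    by (simp add: ld_of_insurance_def ennreal_of_nat_eq_real_of_nat)
  then have "capital Pi0 \<tau> Pr (stake n \<omega>) + Pr (stake n \<omega>) < real (\<omega> !! n)"
    by (metis ennreal_less_iff ennreal_neg less_le_not_le not_le of_nat_0_le_iff order_less_le_trans)
  with insured have "capital Pi0 \<tau> Pr (stake (Suc n) \<omega>) < 0"
    by (simp add: capital_stake_Suc del: stake.simps)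
  then show ?thesis
    unfolding ins_bankrupt_iff_capital by (intro exI[of _ "Suc n"]) simp
qed

text \<open>The premium is enn2real \<Phi>, which is 0 wherever \<Phi> = \<infinity>, i.e.\ exactly where no insurance
  is given.\<close>

lemma insurance_scheme_of_loss_domination:
  assumes "loss_domination_scheme P \<Phi>"
  shows "insurance_scheme P (\<lambda>xs. \<Phi> xs < \<infinity>) (\<lambda>xs. enn2real (\<Phi> xs))"
proof -
  have finite_snoc: "\<And>xs x. \<Phi> xs < \<infinity> \<Longrightarrow> \<Phi> (xs @ [x]) < \<infinity>"
    using assms unfolding loss_domination_scheme_def by blast
  have "(\<exists>n\<ge>1. \<Phi> (stake n \<omega>) < \<infinity>) \<longleftrightarrow> (\<exists>n. \<Phi> (stake n \<omega>) < \<infinity>)" for \<omega>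
    using ex_stake_ge_1_iff[of "\<lambda>xs. \<Phi> xs < \<infinity>", OF finite_snoc] .
  then show ?thesis
    using assms finite_snoc unfolding insurance_scheme_def loss_domination_scheme_def
    by (simp add: enn2real_nonneg less_top[symmetric])
qed

lemma ins_bankrupt_of_loss_domination_imp_ld_bankrupt:
  assumes "Pi0 \<ge> 0" and "ins_bankrupt Pi0 (\<lambda>xs. \<Phi> xs < \<infinity>) (\<lambda>xs. enn2real (\<Phi> xs)) \<omega>"
  shows "ld_bankrupt \<Phi> \<omega>"
proof (rule ccontr)
  assume "\<not> ld_bankrupt \<Phi> \<omega>"
  then have dominated: "of_nat (\<omega> !! n) \<le> \<Phi> (stake n \<omega>)" for n
    unfolding ld_bankrupt_def by (simp add: not_less)
  have "capital Pi0 (\<lambda>xs. \<Phi> xs < \<infinity>) (\<lambda>xs. enn2real (\<Phi> xs)) (stake n \<omega>) \<ge> 0" for n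
  proof (induction n)
    case 0
    then show ?case using assms(1) by simp
  next
    case (Suc n)
    have "\<Phi> (stake n \<omega>) < \<infinity> \<Longrightarrow> real (\<omega> !! n) \<le> enn2real (\<Phi> (stake n \<omega>))"
      using enn2real_mono[OF dominated] by (simp add: top.not_eq_extremum)
    then show ?case
      using Suc.IH by (simp add: capital_stake_Suc del: stake.simps)
  qed
  then show False
    using assms(2) unfolding ins_bankrupt_iff_capital by (meson not_le)
qed

lemma ex_loss_domination_scheme_if_insurance_scheme:
  assumes "insurance_scheme P \<tau> Pr"
    and "\<forall>p\<in>P. measure (iid p) {\<omega> \<in> space (iid p). \<not> ins_bankrupt Pi0 \<tau> Pr \<omega>} > 1 - \<eta>"
  shows "\<exists>\<Phi>. loss_domination_scheme P \<Phi> \<and>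
           (\<forall>p\<in>P. measure (iid p) {\<omega> \<in> space (iid p). ld_bankrupt \<Phi> \<omega>} < \<eta>)"
proof (intro exI[of _ "ld_of_insurance Pi0 \<tau> Pr"] conjI ballI)
  show "loss_domination_scheme P (ld_of_insurance Pi0 \<tau> Pr)"
    using assms(1) by (rule loss_domination_scheme_ld_of_insurance)
  fix p assume "p \<in> P"
  have "measure (iid p) {\<omega> \<in> space (iid p). ld_bankrupt (ld_of_insurance Pi0 \<tau> Pr) \<omega>}
          \<le> measure (iid p) {\<omega> \<in> space (iid p). ins_bankrupt Pi0 \<tau> Pr \<omega>}"
    by (rule measure_iid_Collect_mono[OF pred_ins_bankrupt ld_bankrupt_ld_of_insurance_imp_ins_bankrupt])
  also have "\<dots> = 1 - measure (iid p) {\<omega> \<in> space (iid p). \<not> ins_bankrupt Pi0 \<tau> Pr \<omega>}"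
    by (simp add: measure_iid_Collect_not[OF pred_ins_bankrupt])
  also have "\<dots> < \<eta>"
    using assms(2) \<open>p \<in> P\<close> by auto
  finally show "measure (iid p) {\<omega> \<in> space (iid p). ld_bankrupt (ld_of_insurance Pi0 \<tau> Pr) \<omega>} < \<eta>" .
qed

lemma ex_insurance_scheme_if_loss_domination_scheme:
  assumes "Pi0 \<ge> 0" and "loss_domination_scheme P \<Phi>"
    and "\<forall>p\<in>P. measure (iid p) {\<omega> \<in> space (iid p). ld_bankrupt \<Phi> \<omega>} < \<eta>"
  shows "\<exists>\<tau> Pr. insurance_scheme P \<tau> Pr \<and>
           (\<forall>p\<in>P. measure (iid p) {\<omega> \<in> space (iid p). \<not> ins_bankrupt Pi0 \<tau> Pr \<omega>} > 1 - \<eta>)"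
proof (intro exI[of _ "\<lambda>xs. \<Phi> xs < \<infinity>"] exI[of _ "\<lambda>xs. enn2real (\<Phi> xs)"] conjI ballI)
  let ?\<tau> = "\<lambda>xs. \<Phi> xs < \<infinity>" and ?Pr = "\<lambda>xs. enn2real (\<Phi> xs)"
  show "insurance_scheme P ?\<tau> ?Pr"
    using assms(2) by (rule insurance_scheme_of_loss_domination)
  fix p assume "p \<in> P"
  have "1 - \<eta> < 1 - measure (iid p) {\<omega> \<in> space (iid p). ld_bankrupt \<Phi> \<omega>}"
    using assms(3) \<open>p \<in> P\<close> by auto
  also have "\<dots> \<le> 1 - measure (iid p) {\<omega> \<in> space (iid p). ins_bankrupt Pi0 ?\<tau> ?Pr \<omega>}"
    using measure_iid_Collect_mono[OF pred_ld_bankrupt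
        ins_bankrupt_of_loss_domination_imp_ld_bankrupt[OF assms(1)]] by simp
  also have "\<dots> = measure (iid p) {\<omega> \<in> space (iid p). \<not> ins_bankrupt Pi0 ?\<tau> ?Pr \<omega>}"
    by (simp add: measure_iid_Collect_not[OF pred_ins_bankrupt])
  finally show "measure (iid p) {\<omega> \<in> space (iid p). \<not> ins_bankrupt Pi0 ?\<tau> ?Pr \<omega>} > 1 - \<eta>" .
qed

theorem mainTheorem2:
  fixes P :: "nat pmf set" and \<eta> :: real and Pi0 :: real
  assumes "\<eta> > 0" and "Pi0 \<ge> 0"
  shows "(\<exists>\<tau> Pr. insurance_scheme P \<tau> Pr \<and>
            (\<forall>p\<in>P. measure (iid p) {\<omega> \<in> space (iid p). \<not> ins_bankrupt Pi0 \<tau> Pr \<omega>} > 1 - \<eta>))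
     \<longleftrightarrow>
         (\<exists>\<Phi>. loss_domination_scheme P \<Phi> \<and>
            (\<forall>p\<in>P. measure (iid p) {\<omega> \<in> space (iid p). ld_bankrupt \<Phi> \<omega>} < \<eta>))"
  using ex_loss_domination_scheme_if_insurance_scheme
    ex_insurance_scheme_if_loss_domination_scheme[OF assms(2)]
  by blast

end
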